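(* Let $b\ge 0$ be an integer and let $S$ be a nonempty subset of $\mathbb{Z}$. If $\mathbf{a}_1$ and $\mathbf{a}_2$ are two $b$-orderings of $S$, then $$\alpha_i(S,b,\mathbf{a}_1)=\alpha_i(S,b,\mathbf{a}_2)\quad\text{for all } i=0,1,2,\dots.$$
   Context: $\mathbb{N}=\{0,1,2,\dots\}$. For an integer $b\ge0$ and $a\in\mathbb{Z}$ define $\operatorname{ord}_b(a):=\sup\{k\in\mathbb{N}: a\mathbb{Z}\subseteq b^k\mathbb{Z}\}\in\mathbb{N}\cup\{+\infty\}$, with the convention $0^0=1$. Thus for $b\ge2$, $\operatorname{ord}_b(a)$ is the largest $k$ with $b^k\mid a$ and $\operatorname{ord}_b(0)=+\infty$; $\operatorname{ord}_0(a)=+\infty$ if $a=0$ and $0$ otherwise; $\operatorname{ord}_1(a)=+\infty$ for all $a$. For a nonempty $S\subseteq\mathbb{Z}$, an $S$-test sequence is any sequence $\mathbf{a}=(a_i)_{i\ge0}$ of elements of $S$ (repetitions allowed), and its $b$-exponent sequence is $\alpha_i(S,b,\mathbf{a}):=\sum_{j=0}^{i-1}\operatorname{ord}_b(a_i-a_j)$ (so $\alpha_0=0$). A $b$-ordering of $S$ is an infinite $S$-test sequence $\mathbf{a}=(a_i)_{i=0}^\infty$ such that for every $i\ge1$, $\sum_{j=0}^{i-1}\operatorname{ord}_b(a_i-a_j)=\min_{a'\in S}\sum_{j=0}^{i-1}\operatorname{ord}_b(a'-a_j)$ ($a_0\in S$ arbitrary). *)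

theory Defs
  imports Main "HOL-Library.Extended_Nat"
begin

text \<open>ord_b(a) = sup {k in N. a Z subset b^k Z}, i.e. sup {k. b^k dvd a}, in N union {infinity}.
  Note 0^0 = 1 in Isabelle.\<close>
definition ordb :: "int \<Rightarrow> int \<Rightarrow> enat" where
  "ordb b a = Sup {enat k | k. b ^ k dvd a}"

definition alpha :: "int \<Rightarrow> (nat \<Rightarrow> int) \<Rightarrow> nat \<Rightarrow> enat" where
  "alpha b a i = (\<Sum>j<i. ordb b (a i - a j))"

definition is_b_ordering :: "int set \<Rightarrow> int \<Rightarrow> (nat \<Rightarrow> int) \<Rightarrow> bool" where
  "is_b_ordering S b a \<longleftrightarrow> (\<forall>i. a i \<in> S) \<and>
     (\<forall>i\<ge>1. (\<Sum>j<i. ordb b (a i - a j)) = (INF a'\<in>S. (\<Sum>j<i. ordb b (a' - a j))))"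

end

theory Submission
  imports Defs
begin

text \<open>The value \<open>ord\<^sub>b(u - v)\<close> is a symmetric function satisfying the ultrametric
  inequality. For such a function the total pairwise value
  \<open>\<Sum>\<^sub>i\<^sub><\<^sub>j ord\<^sub>b(y\<^sub>i - y\<^sub>j)\<close> of any \<open>n\<close> points of \<open>S\<close> is at least
  \<open>\<alpha>\<^sub>0 + \<dots> + \<alpha>\<^sub>n\<^sub>-\<^sub>1\<close> of a \<open>b\<close>-ordering: remove a point whose values towards the first
  \<open>n - 1\<close> terms of the ordering are dominated by its values towards the other points, and
  induct. The first \<open>n\<close> terms of a \<open>b\<close>-ordering attain this bound, so the partial sums of
  \<open>\<alpha>\<close> are the minimal pairwise values and agree for all \<open>b\<close>-orderings; their
  differences are the \<open>\<alpha>\<^sub>i\<close>.\<close>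

lemma enat_le_by_nat_bounds:
  fixes x y :: enat
  assumes "\<And>k. enat k \<le> x \<Longrightarrow> enat k \<le> y"
  shows "x \<le> y"
proof (cases y)
  case (enat n)
  then have "\<not> enat (Suc n) \<le> x" using assms[of "Suc n"] by auto
  then show ?thesis using enat by (cases x) auto
qed simp

lemma enat_le_ordb_iff: "enat k \<le> ordb b a \<longleftrightarrow> b ^ k dvd a"
proof (cases k)
  case (Suc m)
  have "enat k \<le> ordb b a \<longleftrightarrow> (\<exists>l. b ^ l dvd a \<and> m < l)"
    unfolding Suc Suc_ile_eq ordb_def less_Sup_iff by auto
  also have "\<dots> \<longleftrightarrow> b ^ k dvd a"
    using Suc by (metis Suc_le_eq dvd_trans le_imp_power_dvd lessI)
  finally show ?thesis .
qed (simp add: zero_enat_def[symmetric])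

lemma ordb_diff_commute: "ordb b (u - v) = ordb b (v - u)"
  unfolding ordb_def by (metis dvd_diff_commute)

lemma ordb_diff_ultrametric: "min (ordb b (u - v)) (ordb b (v - w)) \<le> ordb b (u - w)"
proof (rule enat_le_by_nat_bounds)
  fix k assume "enat k \<le> min (ordb b (u - v)) (ordb b (v - w))"
  then have "b ^ k dvd u - v" "b ^ k dvd v - w" by (auto simp: enat_le_ordb_iff)
  then have "b ^ k dvd (u - v) + (v - w)" by (rule dvd_add)
  then show "enat k \<le> ordb b (u - w)" by (simp add: enat_le_ordb_iff)
qed

text \<open>Induction on \<open>J\<close>: for a new \<open>j\<^sub>0\<close> discard the point \<open>y i\<^sub>0\<close> maximising
  \<open>d (y i) (a j\<^sub>0)\<close>; for every other \<open>m\<close> the ultrametric inequality then gives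
  \<open>d (y m) (a j\<^sub>0) \<le> d (y m) (y i\<^sub>0)\<close>.\<close>
lemma ultrametric_ex_sum_le_sum_others:
  fixes d :: "'a \<Rightarrow> 'a \<Rightarrow> 'b::{linorder, canonically_ordered_monoid_add}"
  assumes commute: "\<And>u v. d u v = d v u"
    and ultrametric: "\<And>u v w. min (d u v) (d v w) \<le> d u w"
    and "finite J" "finite I" "card J < card I"
  shows "\<exists>m\<in>I. (\<Sum>j\<in>J. d (y m) (a j)) \<le> (\<Sum>i\<in>I - {m}. d (y m) (y i))"
  using assms(3-5)
proof (induction J arbitrary: I rule: finite_induct)
  case empty
  then show ?case by (auto simp: card_gt_0_iff)
next
  case (insert j0 J I)
  let ?M = "Max ((\<lambda>i. d (y i) (a j0)) ` I)"
  have "I \<noteq> {}" using insert.prems by auto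
  then have "?M \<in> (\<lambda>i. d (y i) (a j0)) ` I" using insert.prems by (intro Max_in) auto
  then obtain i0 where i0: "i0 \<in> I" "d (y i0) (a j0) = ?M" by auto
  have i0_max: "d (y i) (a j0) \<le> d (y i0) (a j0)" if "i \<in> I" for i
    using i0(2) that insert.prems(1) by simp
  have "card (insert j0 J) = Suc (card J)"
    using insert.hyps(1,2) by simp
  then have "card J < card (I - {i0})"
    using insert.prems(2) card_Diff_singleton[OF i0(1)] by linarith
  then obtain m where m: "m \<in> I - {i0}"
    and IH: "(\<Sum>j\<in>J. d (y m) (a j)) \<le> (\<Sum>i\<in>I - {i0} - {m}. d (y m) (y i))"
    using insert.IH[OF finite_Diff[OF insert.prems(1)]] by blast
  have "d (y m) (a j0) \<le> d (a j0) (y i0)"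
    using i0_max[of m] m commute[of "a j0"] by simp
  then have "d (y m) (a j0) \<le> d (y m) (y i0)"
    using ultrametric[of "y m" "a j0" "y i0"] by simp
  then have "(\<Sum>j\<in>insert j0 J. d (y m) (a j))
      \<le> d (y m) (y i0) + (\<Sum>i\<in>I - {i0} - {m}. d (y m) (y i))"
    using insert.hyps IH by (simp add: add_mono)
  also have "I - {i0} - {m} = I - {m} - {i0}"
    by blast
  also have "d (y m) (y i0) + (\<Sum>i\<in>I - {m} - {i0}. d (y m) (y i)) = (\<Sum>i\<in>I - {m}. d (y m) (y i))"
    using m i0(1) insert.prems(1) by (intro sum.remove[symmetric]) auto
  finally show ?case using m by auto
qed

definition pairwise_sum :: "('a \<Rightarrow> 'a \<Rightarrow> 'b::comm_monoid_add) \<Rightarrow> (nat \<Rightarrow> 'a) \<Rightarrow> nat set \<Rightarrow> 'b"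
  where "pairwise_sum d y I = (\<Sum>j\<in>I. \<Sum>i\<in>I. if i < j then d (y i) (y j) else 0)"

lemma pairwise_sum_remove:
  fixes d :: "'a \<Rightarrow> 'a \<Rightarrow> 'b::comm_monoid_add"
  assumes commute: "\<And>u v. d u v = d v u" and "finite I" "m \<in> I"
  shows "pairwise_sum d y I = pairwise_sum d y (I - {m}) + (\<Sum>i\<in>I - {m}. d (y i) (y m))"
proof -
  let ?f = "\<lambda>i j. if i < j then d (y i) (y j) else 0"
  have "pairwise_sum d y I = (\<Sum>j\<in>I - {m}. \<Sum>i\<in>I. ?f i j) + (\<Sum>i\<in>I. ?f i m)"
    unfolding pairwise_sum_def using sum.remove[OF assms(2,3)] by (simp add: add.commute)
  also have "\<dots> = (\<Sum>j\<in>I - {m}. ?f m j + (\<Sum>i\<in>I - {m}. ?f i j)) + (\<Sum>i\<in>I - {m}. ?f i m)"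
    by (simp add: sum.remove[OF assms(2,3)])
  also have "\<dots> = pairwise_sum d y (I - {m}) + (\<Sum>i\<in>I - {m}. ?f m i + ?f i m)"
    unfolding pairwise_sum_def by (simp add: sum.distrib algebra_simps)
  also have "(\<Sum>i\<in>I - {m}. ?f m i + ?f i m) = (\<Sum>i\<in>I - {m}. d (y i) (y m))"
    by (intro sum.cong) (auto simp: commute)
  finally show ?thesis .
qed

lemma pairwise_sum_lessThan:
  fixes d :: "'a \<Rightarrow> 'a \<Rightarrow> 'b::comm_monoid_add"
  assumes commute: "\<And>u v. d u v = d v u"
  shows "pairwise_sum d y {..<n} = (\<Sum>k<n. \<Sum>j<k. d (y k) (y j))"
proof (induction n)
  case 0
  then show ?case by (simp add: pairwise_sum_def)
next
  case (Suc n)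
  have "pairwise_sum d y {..<Suc n} = pairwise_sum d y {..<n} + (\<Sum>i<n. d (y i) (y n))"
    using pairwise_sum_remove[OF commute, where I="{..<Suc n}" and m=n] by (simp add: lessThan_Suc)
  with Suc show ?case by (simp add: commute)
qed

definition alpha_sum :: "int \<Rightarrow> (nat \<Rightarrow> int) \<Rightarrow> nat \<Rightarrow> enat"
  where "alpha_sum b a n = (\<Sum>k<n. alpha b a k)"

lemma alpha_sum_eq_pairwise_sum: "alpha_sum b a n = pairwise_sum (\<lambda>u v. ordb b (u - v)) a {..<n}"
  unfolding alpha_sum_def alpha_def by (simp add: pairwise_sum_lessThan ordb_diff_commute)

lemma b_ordering_alpha_le:
  assumes "is_b_ordering S b a" and "x \<in> S"
  shows "alpha b a n \<le> (\<Sum>j<n. ordb b (x - a j))"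
proof (cases "n = 0")
  case False
  then have "alpha b a n = (INF x\<in>S. \<Sum>j<n. ordb b (x - a j))"
    using assms(1) unfolding is_b_ordering_def alpha_def by auto
  also have "\<dots> \<le> (\<Sum>j<n. ordb b (x - a j))"
    using assms(2) by (rule INF_lower)
  finally show ?thesis .
qed (simp add: alpha_def)

lemma b_ordering_alpha_sum_le_pairwise_sum:
  assumes "is_b_ordering S b a" and "finite I" and "y ` I \<subseteq> S"
  shows "alpha_sum b a (card I) \<le> pairwise_sum (\<lambda>u v. ordb b (u - v)) y I"
  using assms(2,3)
proof (induction "card I" arbitrary: I)
  case 0
  then show ?case by (simp add: alpha_sum_def)
next
  case (Suc n)
  let ?d = "\<lambda>u v. ordb b (u - v)"
  obtain m where m: "m \<in> I"
    and m_le: "(\<Sum>j<n. ?d (y m) (a j)) \<le> (\<Sum>i\<in>I - {m}. ?d (y m) (y i))"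
    using ultrametric_ex_sum_le_sum_others[of ?d "{..<n}" I y a] Suc.hyps(2) Suc.prems(1)
    by (auto simp: ordb_diff_commute ordb_diff_ultrametric)
  have card_rest: "card (I - {m}) = n"
    using Suc.hyps(2) m Suc.prems(1) by simp
  have "alpha_sum b a (card I) = alpha_sum b a (card (I - {m})) + alpha b a n"
    by (simp add: alpha_sum_def card_rest Suc.hyps(2)[symmetric])
  also have "\<dots> \<le> pairwise_sum ?d y (I - {m}) + (\<Sum>i\<in>I - {m}. ?d (y m) (y i))"
    using Suc.hyps(1)[OF card_rest[symmetric]] Suc.prems m b_ordering_alpha_le[OF assms(1), of "y m" n]
    by (intro add_mono) (auto intro: order_trans[OF _ m_le])
  also have "\<dots> = pairwise_sum ?d y I"
    using pairwise_sum_remove[of ?d I m y] Suc.prems(1) m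
    by (simp add: ordb_diff_commute)
  finally show ?case .
qed

lemma b_orderings_alpha_sum_eq:
  assumes "is_b_ordering S b a1" and "is_b_ordering S b a2"
  shows "alpha_sum b a1 n = alpha_sum b a2 n"
proof -
  have "alpha_sum b a n \<le> alpha_sum b a' n"
    if "is_b_ordering S b a" "is_b_ordering S b a'" for a a'
    using b_ordering_alpha_sum_le_pairwise_sum[OF that(1), of "{..<n}" a'] that(2)
    by (auto simp: alpha_sum_eq_pairwise_sum is_b_ordering_def)
  with assms show ?thesis by (blast intro: antisym)
qed

lemma b_ordering_alpha_mono:
  assumes "is_b_ordering S b a"
  shows "mono (alpha b a)"
  unfolding mono_iff_le_Suc
proof
  fix i
  have "alpha b a i \<le> (\<Sum>j<i. ordb b (a (Suc i) - a j))"
    using assms b_ordering_alpha_le[OF assms] by (simp add: is_b_ordering_def)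
  also have "\<dots> \<le> alpha b a (Suc i)"
    unfolding alpha_def by (intro sum_mono2) auto
  finally show "alpha b a i \<le> alpha b a (Suc i)" .
qed

lemma b_ordering_alpha_sum_le:
  assumes "is_b_ordering S b a"
  shows "alpha_sum b a n \<le> of_nat n * alpha b a n"
proof -
  have "alpha_sum b a n \<le> (\<Sum>k<n. alpha b a n)"
    unfolding alpha_sum_def
    by (intro sum_mono monoD[OF b_ordering_alpha_mono[OF assms]]) simp
  then show ?thesis by simp
qed

theorem theorem3p3:
  fixes S :: "int set" and b :: int and a1 a2 :: "nat \<Rightarrow> int"
  assumes "b \<ge> 0" and "S \<noteq> {}"
    and "is_b_ordering S b a1" and "is_b_ordering S b a2"
  shows "\<forall>i. alpha b a1 i = alpha b a2 i"
proof
  fix n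
  have sum_eq: "alpha_sum b a1 k = alpha_sum b a2 k" for k
    using assms(3,4) by (rule b_orderings_alpha_sum_eq)
  have "alpha_sum b a1 n + alpha b a1 n = alpha_sum b a1 n + alpha b a2 n"
    using sum_eq[of "Suc n"] sum_eq[of n] by (simp add: alpha_sum_def)
  moreover have "alpha_sum b a1 n = \<infinity> \<Longrightarrow> alpha b a1 n = \<infinity> \<and> alpha b a2 n = \<infinity>"
    using b_ordering_alpha_sum_le[OF assms(3), of n] b_ordering_alpha_sum_le[OF assms(4), of n]
    by (auto simp: sum_eq imult_is_infinity of_nat_eq_enat)
  ultimately show "alpha b a1 n = alpha b a2 n"
    by (metis enat_add_left_cancel)
qed

end
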